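(* For each $\gamma\in\mathbb{R}$ let $\hat g_{-,\gamma}$ be any minimizer of $\hat h_{-,\gamma}$ over $\mathcal{F}$. Then: (1) $\hat h_{-,\gamma}(\hat g_{-,\gamma})$ is monotonically increasing in $\gamma$; (2) $\hat e_{\text{orig}}(\hat g_{-,\gamma})$ is monotonically decreasing in $\gamma$; (3) for fixed $\epsilon_{\text{abs}}>0$, the quantity $\frac{\hat h_{-,\gamma}(\hat g_{-,\gamma})}{\epsilon_{\text{abs}}}-\gamma$ is monotonically decreasing in $\gamma$ over the range where $\hat e_{\text{orig}}(\hat g_{-,\gamma})\le\epsilon_{\text{abs}}$, and monotonically increasing in $\gamma$ otherwise.
   Context: Setting: $\mathcal{F}$ a set of prediction models, $L\ge0$ a loss, and a fixed observed sample $(\mathbf{y}_{[i]},\mathbf{X}_{1[i]},\mathbf{X}_{2[i]})$, $i=1,\dots,n$, $n\ge2$. $\hat e_{\text{orig}}(f)=\frac1n\sum_iL\{f,(\mathbf{y}_{[i]},\mathbf{X}_{1[i]},\mathbf{X}_{2[i]})\}$; $\hat e_{\text{switch}}(f)=\frac1{n(n-1)}\sum_i\sum_{j\ne i}L\{f,(\mathbf{y}_{[j]},\mathbf{X}_{1[i]},\mathbf{X}_{2[j]})\}$. For $\gamma\in\mathbb{R}$, $\hat h_{-,\gamma}(f):=\gamma\hat e_{\text{orig}}(f)+\hat e_{\text{switch}}(f)$. Standing assumptions: $\min_{f\in\mathcal{F}}\hat e_{\text{orig}}(f)>0$ and minimizers of $\hat h_{-,\gamma}$ over $\mathcal{F}$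 exist for every $\gamma$. *)

theory Defs
  imports Complex_Main
begin

definition e_orig ::
  "('f \<Rightarrow> 'y \<times> 'a \<times> 'b \<Rightarrow> real) \<Rightarrow> nat \<Rightarrow> (nat \<Rightarrow> 'y) \<Rightarrow> (nat \<Rightarrow> 'a) \<Rightarrow> (nat \<Rightarrow> 'b) \<Rightarrow> 'f \<Rightarrow> real"
  where "e_orig L n y X1 X2 f = (1 / real n) * (\<Sum>i\<in>{1..n}. L f (y i, X1 i, X2 i))"

definition e_switch ::
  "('f \<Rightarrow> 'y \<times> 'a \<times> 'b \<Rightarrow> real) \<Rightarrow> nat \<Rightarrow> (nat \<Rightarrow> 'y) \<Rightarrow> (nat \<Rightarrow> 'a) \<Rightarrow> (nat \<Rightarrow> 'b) \<Rightarrow> 'f \<Rightarrow> real"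
  where "e_switch L n y X1 X2 f =
    (1 / (real n * (real n - 1))) * (\<Sum>i\<in>{1..n}. \<Sum>j\<in>{1..n} - {i}. L f (y j, X1 i, X2 j))"

definition h_minus ::
  "('f \<Rightarrow> 'y \<times> 'a \<times> 'b \<Rightarrow> real) \<Rightarrow> nat \<Rightarrow> (nat \<Rightarrow> 'y) \<Rightarrow> (nat \<Rightarrow> 'a) \<Rightarrow> (nat \<Rightarrow> 'b) \<Rightarrow> real \<Rightarrow> 'f \<Rightarrow> real"
  where "h_minus L n y X1 X2 \<gamma> f = \<gamma> * e_orig L n y X1 X2 f + e_switch L n y X1 X2 f"

end

theory Submission
  imports Defs
begin

text \<open>All three claims only use that g \<gamma> minimises \<gamma> E + S, compared against the
  competitor g \<gamma>' at a second parameter \<gamma>'. Comparing at \<gamma> \<le> \<gamma>' in both directions gives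
  (\<gamma>' - \<gamma>)(E(g \<gamma>') - E(g \<gamma>)) \<le> 0; comparing in one direction, with E(g \<gamma>) \<le> \<epsilon> resp.
  E(g \<gamma>') > \<epsilon>, bounds the increase of the minimal value by (\<gamma>' - \<gamma>) \<epsilon> from above resp. below.
  Nonnegativity of the loss enters only in the first claim.\<close>

locale linear_param_min =
  fixes F :: "'f set" and E S :: "'f \<Rightarrow> real" and g :: "real \<Rightarrow> 'f"
  assumes g_mem: "g \<gamma> \<in> F"
    and g_min: "f \<in> F \<Longrightarrow> \<gamma> * E (g \<gamma>) + S (g \<gamma>) \<le> \<gamma> * E f + S f"
begin

definition min_value :: "real \<Rightarrow> real"
  where "min_value \<gamma> = \<gamma> * E (g \<gamma>) + S (g \<gamma>)"

lemma min_value_le_competitor: "min_value a \<le> a * E (g b) + S (g b)"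
  unfolding min_value_def by (rule g_min[OF g_mem])

lemma mono_min_value:
  assumes E_nonneg: "\<And>f. f \<in> F \<Longrightarrow> E f \<ge> 0"
  shows "mono min_value"
proof (rule monoI)
  fix a b :: real assume "a \<le> b"
  then have "a * E (g b) \<le> b * E (g b)"
    using E_nonneg[OF g_mem] by (rule mult_right_mono)
  then show "min_value a \<le> min_value b"
    using min_value_le_competitor[of a b] by (simp add: min_value_def)
qed

lemma antimono_E_min: "antimono (\<lambda>\<gamma>. E (g \<gamma>))"
proof (rule antimonoI)
  fix a b :: real assume ab: "a \<le> b"
  show "E (g b) \<le> E (g a)"
  proof (cases "a = b")
    case False
    have "(b - a) * (E (g b) - E (g a)) \<le> 0"
      using min_value_le_competitor[of a b] min_value_le_competitor[of b a]
      by (simp add: min_value_def algebra_simps)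
    with ab False show ?thesis by (simp add: mult_le_0_iff)
  qed simp
qed

lemma min_value_increase_le:
  assumes "E (g a) \<le> \<epsilon>" "a \<le> b"
  shows "min_value b \<le> min_value a + (b - a) * \<epsilon>"
proof -
  have "(b - a) * E (g a) \<le> (b - a) * \<epsilon>"
    using assms by (simp add: mult_left_mono)
  then show ?thesis
    using min_value_le_competitor[of b a] by (simp add: min_value_def algebra_simps)
qed

lemma min_value_increase_ge:
  assumes "E (g b) > \<epsilon>" "a \<le> b"
  shows "min_value a + (b - a) * \<epsilon> \<le> min_value b"
proof -
  have "(b - a) * \<epsilon> \<le> (b - a) * E (g b)"
    using assms by (simp add: mult_left_mono)
  then show ?thesis
    using min_value_le_competitor[of a b] by (simp add: min_value_def algebra_simps)
qed

lemma antimono_on_scaled_min_value: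
  assumes "\<epsilon> > 0"
  shows "antimono_on {\<gamma>. E (g \<gamma>) \<le> \<epsilon>} (\<lambda>\<gamma>. min_value \<gamma> / \<epsilon> - \<gamma>)"
proof (rule monotone_onI)
  fix a b assume "a \<in> {\<gamma>. E (g \<gamma>) \<le> \<epsilon>}" "a \<le> b"
  then have "min_value b \<le> min_value a + (b - a) * \<epsilon>"
    by (intro min_value_increase_le) auto
  then have "min_value b / \<epsilon> \<le> (min_value a + (b - a) * \<epsilon>) / \<epsilon>"
    using assms by (rule divide_right_mono[OF _ less_imp_le])
  with assms show "min_value b / \<epsilon> - b \<le> min_value a / \<epsilon> - a"
    by (simp add: add_divide_distrib)
qed

lemma mono_on_scaled_min_value:
  assumes "\<epsilon> > 0"
  shows "mono_on {\<gamma>. E (g \<gamma>) > \<epsilon>} (\<lambda>\<gamma>. min_value \<gamma> / \<epsilon> - \<gamma>)"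
proof (rule monotone_onI)
  fix a b assume "b \<in> {\<gamma>. E (g \<gamma>) > \<epsilon>}" "a \<le> b"
  then have "min_value a + (b - a) * \<epsilon> \<le> min_value b"
    by (intro min_value_increase_ge) auto
  then have "(min_value a + (b - a) * \<epsilon>) / \<epsilon> \<le> min_value b / \<epsilon>"
    using assms by (rule divide_right_mono[OF _ less_imp_le])
  with assms show "min_value a / \<epsilon> - a \<le> min_value b / \<epsilon> - b"
    by (simp add: add_divide_distrib)
qed

end

lemma e_orig_nonneg:
  assumes "\<And>f z. L f z \<ge> 0"
  shows "e_orig L n y X1 X2 f \<ge> 0"
  unfolding e_orig_def by (intro mult_nonneg_nonneg sum_nonneg) (auto simp: assms)

theorem lemma15:
  fixes F :: "'f set"
    and L :: "'f \<Rightarrow> 'y \<times> 'a \<times> 'b \<Rightarrow> real"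
    and n :: nat and y :: "nat \<Rightarrow> 'y" and X1 :: "nat \<Rightarrow> 'a" and X2 :: "nat \<Rightarrow> 'b"
    and g :: "real \<Rightarrow> 'f"
  assumes n2: "n \<ge> 2"
    and L_nonneg: "\<And>f z. L f z \<ge> 0"
    and min_pos: "\<exists>f0\<in>F. (\<forall>f\<in>F. e_orig L n y X1 X2 f0 \<le> e_orig L n y X1 X2 f)
                        \<and> e_orig L n y X1 X2 f0 > 0"
    and min_exists: "\<forall>\<gamma>. \<exists>f0\<in>F. \<forall>f\<in>F. h_minus L n y X1 X2 \<gamma> f0 \<le> h_minus L n y X1 X2 \<gamma> f"
    and g_min: "\<And>\<gamma>. g \<gamma> \<in> F \<and> (\<forall>f\<in>F. h_minus L n y X1 X2 \<gamma> (g \<gamma>) \<le> h_minus L n y X1 X2 \<gamma> f)"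
  shows "mono (\<lambda>\<gamma>. h_minus L n y X1 X2 \<gamma> (g \<gamma>))
         \<and> antimono (\<lambda>\<gamma>. e_orig L n y X1 X2 (g \<gamma>))
         \<and> (\<forall>\<epsilon>>0.
           antimono_on {\<gamma>. e_orig L n y X1 X2 (g \<gamma>) \<le> \<epsilon>}
             (\<lambda>\<gamma>. h_minus L n y X1 X2 \<gamma> (g \<gamma>) / \<epsilon> - \<gamma>)
         \<and> mono_on {\<gamma>. e_orig L n y X1 X2 (g \<gamma>) > \<epsilon>}
             (\<lambda>\<gamma>. h_minus L n y X1 X2 \<gamma> (g \<gamma>) / \<epsilon> - \<gamma>))"
proof -
  interpret linear_param_min F "e_orig L n y X1 X2" "e_switch L n y X1 X2" g
    using g_min by unfold_locales (auto simp: h_minus_def)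
  have h_eq: "h_minus L n y X1 X2 \<gamma> (g \<gamma>) = min_value \<gamma>" for \<gamma>
    by (simp add: h_minus_def min_value_def)
  show ?thesis
    unfolding h_eq
    using mono_min_value[OF e_orig_nonneg[OF L_nonneg]] antimono_E_min
      antimono_on_scaled_min_value mono_on_scaled_min_value
    by blast
qed

end
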